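(* Let $M$ be an Orlicz function and let $L_M$ be the Orlicz space either on $(0,1)$ or on $(0,\infty)$. Then $$4\Big\|\bigoplus_{k\geq1}\sigma_{\lambda_k}f_k\Big\|_{L_M}\geq \sum_{k\geq1}\lambda_k\|f_k\|_{L_M}$$ for every sequence $(f_k)_{k\ge1}\subset L_M$ and every sequence $(\lambda_k)_{k\ge1}\subset(0,1)$ with $\sum_{k\ge1}\lambda_k=1$.
   Context: An Orlicz function is an even convex function $M$ on $\mathbb{R}$ with $M(0)=0$; $\|g\|_{L_M}=\inf\{\lambda>0:\int M(|g|/\lambda)\le1\}$. The dilation is $(\sigma_u g)(t)=g(t/u)$ (functions defined only on $(0,1)$ are extended by $0$). $\bigoplus_k g_k$ denotes the disjoint sum of the functions $g_k$, i.e. a measurable function on the underlying interval whose distribution function is $\sum_k m(\{|g_k|>t\})$ (a function equimeasurable with the $g_k$ placed on pairwise disjoint sets). *)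

theory Defs
  imports "HOL-Analysis.Analysis"
begin

definition orlicz_function :: "(real \<Rightarrow> real) \<Rightarrow> bool" where
  "orlicz_function M \<longleftrightarrow> convex_on UNIV M \<and> (\<forall>x. M (-x) = M x) \<and> M 0 = 0"

text \<open>Luxemburg norm on the interval I (Lebesgue measure on I), valued in [0,\<infinity>];
  the infimum of the empty set is \<infinity>.\<close>
definition orlicz_norm :: "(real \<Rightarrow> real) \<Rightarrow> real set \<Rightarrow> (real \<Rightarrow> real) \<Rightarrow> ennreal" where
  "orlicz_norm M I g = Inf {ennreal c | c. c > 0 \<and>
      (\<integral>\<^sup>+ x. ennreal (M (\<bar>g x\<bar> / c)) \<partial>(lebesgue_on I)) \<le> 1}"

definition in_orlicz :: "(real \<Rightarrow> real) \<Rightarrow> real set \<Rightarrow> (real \<Rightarrow> real) \<Rightarrow> bool" where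
  "in_orlicz M I g \<longleftrightarrow> g \<in> borel_measurable (lebesgue_on I) \<and> orlicz_norm M I g < \<infinity>"

definition dilation :: "real set \<Rightarrow> real \<Rightarrow> (real \<Rightarrow> real) \<Rightarrow> real \<Rightarrow> real" where
  "dilation I u g t = (if t / u \<in> I then g (t / u) else 0)"

text \<open>h is a disjoint sum of the g k on I: measurable on I and its distribution
  function is the sum of the distribution functions of the g k.\<close>
definition is_disjoint_sum :: "real set \<Rightarrow> (nat \<Rightarrow> real \<Rightarrow> real) \<Rightarrow> (real \<Rightarrow> real) \<Rightarrow> bool" where
  "is_disjoint_sum I g h \<longleftrightarrow> h \<in> borel_measurable (lebesgue_on I) \<and>
     (\<forall>t>0. emeasure (lebesgue_on I) {x\<in>I. \<bar>h x\<bar> > t}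
            = (\<Sum>k. emeasure (lebesgue_on I) {x\<in>I. \<bar>g k x\<bar> > t}))"

end

theory Submission
  imports Defs
begin

text \<open>
  Write \<rho>(g, c) for the modular \<integral> M(|g| / c). By the layer cake formula \<rho>(g, c) depends
  only on the distribution function of |g|, and dilation by \<lambda> multiplies the distribution
  function by \<lambda>; hence \<rho>(h, c) is the \<lambda>-weighted sum of the \<rho>(f k, c). Convexity gives
  \<parallel>g\<parallel> \<le> c (1 + \<rho>(g, c)), so for every c with \<rho>(h, c) \<le> 1 the weighted sum of the
  \<parallel>f k\<parallel> is at most c (1 + \<rho>(h, c)) \<le> 2c. Thus the constant 4 can even be improved to 2.
\<close>

lemma orlicz_function_nonneg:
  assumes "orlicz_function M"
  shows "0 \<le> M x"
proof -
  have "M ((1 - 1/2) *\<^sub>R x + (1/2) *\<^sub>R (-x)) \<le> (1 - 1/2) * M x + (1/2) * M (-x)"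
    using assms by (intro convex_onD) (auto simp: orlicz_function_def)
  then show ?thesis
    using assms by (simp add: orlicz_function_def)
qed

lemma orlicz_function_scale_le:
  assumes "orlicz_function M" and "0 \<le> a" and "a \<le> 1"
  shows "M (a * x) \<le> a * M x"
proof -
  have "M ((1 - a) *\<^sub>R 0 + a *\<^sub>R x) \<le> (1 - a) * M 0 + a * M x"
    using assms by (intro convex_onD) (auto simp: orlicz_function_def)
  then show ?thesis
    using assms by (simp add: orlicz_function_def)
qed

lemma orlicz_function_mono:
  assumes M: "orlicz_function M" and "0 \<le> x" and "x \<le> y"
  shows "M x \<le> M y"
proof (cases "y = 0")
  case True
  then show ?thesis using assms by simp
next
  case False
  then have "0 < y" using assms by simp
  have "M ((x / y) * y) \<le> (x / y) * M y"
    using assms \<open>0 < y\<close> by (intro orlicz_function_scale_le) auto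
  also have "\<dots> \<le> 1 * M y"
    using assms \<open>0 < y\<close> orlicz_function_nonneg[OF M, of y]
    by (intro mult_right_mono) auto
  finally show ?thesis using \<open>0 < y\<close> by simp
qed

lemma orlicz_function_continuous:
  assumes "orlicz_function M"
  shows "continuous_on UNIV M"
  using assms by (intro convex_on_continuous) (auto simp: orlicz_function_def)

lemma borel_measurable_orlicz_function:
  assumes "orlicz_function M"
  shows "M \<in> borel_measurable borel"
  using orlicz_function_continuous[OF assms] by (rule borel_measurable_continuous_onI)

lemma orlicz_function_superlevel:
  assumes M: "orlicz_function M" and "0 < s" and "s < M x0"
  obtains T where "0 < T" and "\<And>x. 0 \<le> x \<Longrightarrow> s < M x \<longleftrightarrow> T < x"
proof -
  have M0: "M 0 = 0" and "M \<bar>x0\<bar> = M x0"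
    using M by (auto simp: orlicz_function_def abs_if)
  moreover have "continuous_on {0..\<bar>x0\<bar>} M"
    using orlicz_function_continuous[OF M] by (rule continuous_on_subset) simp
  ultimately obtain T where T: "0 \<le> T" "M T = s"
    using IVT'[of M 0 s "\<bar>x0\<bar>"] assms by auto
  with M0 \<open>0 < s\<close> have "0 < T"
    by (cases "T = 0") auto
  have "s < M x \<longleftrightarrow> T < x" if "0 \<le> x" for x
  proof
    assume "s < M x"
    then show "T < x"
      using orlicz_function_mono[OF M that, of T] T by fastforce
  next
    assume "T < x"
    \<comment> \<open>convexity through the origin makes M strictly increasing beyond level s > 0\<close>
    have "s \<le> (T / x) * M x"
      using orlicz_function_scale_le[OF M, of "T / x" x] T \<open>T < x\<close> by simp
    moreover have "0 < M x"
      using calculation \<open>0 < s\<close> orlicz_function_nonneg[OF M, of x]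
      by (cases "M x = 0") auto
    then have "(T / x) * M x < 1 * M x"
      using \<open>0 < T\<close> \<open>T < x\<close> by (intro mult_strict_right_mono) auto
    ultimately show "s < M x" by simp
  qed
  with \<open>0 < T\<close> show ?thesis
    by (rule that)
qed

lemma sigma_finite_lebesgue_on:
  assumes "S \<in> sets lebesgue"
  shows "sigma_finite_measure (lebesgue_on (S :: real set))"
proof (rule sigma_finite_measure_restrict_space)
  show "sigma_finite_measure (lebesgue :: real measure)"
  proof
    have "\<exists>n::nat. x \<in> {- real n..real n}" for x :: real
      by (metis abs_le_iff atLeastAtMost_iff minus_le_iff real_arch_simple)
    then show "\<exists>A :: real set set. countable A \<and> A \<subseteq> sets lebesgue \<and> \<Union> A = space lebesgue \<and>
        (\<forall>a\<in>A. emeasure lebesgue a \<noteq> \<infinity>)"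
      by (intro exI[of _ "range (\<lambda>n::nat. {- real n..real n})"]) auto
  qed
qed (use assms in simp)

lemma measurable_indicator_subgraph:
  fixes u :: "'a \<Rightarrow> real"
  assumes [measurable]: "u \<in> borel_measurable N"
  shows "(\<lambda>(x, s). indicator {0<..<u x} s :: ennreal) \<in> borel_measurable (N \<Otimes>\<^sub>M lborel)"
  unfolding indicator_def case_prod_beta greaterThanLessThan_iff by measurable

lemma borel_measurable_emeasure_superlevel:
  fixes u :: "'a \<Rightarrow> real"
  assumes "sigma_finite_measure N" and [measurable]: "u \<in> borel_measurable N"
  shows "(\<lambda>s. emeasure N {x \<in> space N. s < u x}) \<in> borel_measurable borel"
proof -
  interpret N: sigma_finite_measure N by fact
  have "(\<lambda>(s, x). indicator {x \<in> space N. s < u x} x :: ennreal) \<in> borel_measurable (borel \<Otimes>\<^sub>M N)"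
    unfolding indicator_def case_prod_beta by measurable
  then have "(\<lambda>s. \<integral>\<^sup>+x. indicator {x \<in> space N. s < u x} x \<partial>N) \<in> borel_measurable borel"
    by (rule N.borel_measurable_nn_integral)
  then show ?thesis
    by simp
qed

lemma nn_integral_layer_cake:
  fixes u :: "'a \<Rightarrow> real"
  assumes "sigma_finite_measure N" and u: "u \<in> borel_measurable N" and "\<And>x. 0 \<le> u x"
  shows "(\<integral>\<^sup>+x. u x \<partial>N) = (\<integral>\<^sup>+s\<in>{0<..}. emeasure N {x \<in> space N. s < u x} \<partial>lborel)"
proof -
  interpret pair_sigma_finite N lborel
    by (intro pair_sigma_finite.intro assms lborel.sigma_finite_measure_axioms)
  have "(\<integral>\<^sup>+x. u x \<partial>N) = (\<integral>\<^sup>+x. (\<integral>\<^sup>+s. indicator {0<..<u x} s \<partial>lborel) \<partial>N)"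
    using assms by (intro nn_integral_cong) simp
  also have "\<dots> = (\<integral>\<^sup>+s. (\<integral>\<^sup>+x. indicator {0<..<u x} s \<partial>N) \<partial>lborel)"
    using Fubini'[OF measurable_indicator_subgraph[OF u]] by simp
  also have "\<dots> = (\<integral>\<^sup>+s\<in>{0<..}. emeasure N {x \<in> space N. s < u x} \<partial>lborel)"
  proof (intro nn_integral_cong)
    fix s :: real
    have "(\<integral>\<^sup>+x. indicator {0<..<u x} s \<partial>N)
        = (\<integral>\<^sup>+x. indicator {0<..} s * indicator {x \<in> space N. s < u x} x \<partial>N)"
      by (intro nn_integral_cong) (auto split: split_indicator)
    also have "\<dots> = indicator {0<..} s * emeasure N {x \<in> space N. s < u x}"
      using u by (simp add: nn_integral_cmult_indicator)
    finally show "(\<integral>\<^sup>+x. indicator {0<..<u x} s \<partial>N)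
        = emeasure N {x \<in> space N. s < u x} * indicator {0<..} s"
      by (simp add: mult.commute)
  qed
  finally show ?thesis .
qed

definition orlicz_modular :: "(real \<Rightarrow> real) \<Rightarrow> 'a measure \<Rightarrow> ('a \<Rightarrow> real) \<Rightarrow> real \<Rightarrow> ennreal"
  where "orlicz_modular M N g c = (\<integral>\<^sup>+x. ennreal (M (\<bar>g x\<bar> / c)) \<partial>N)"

lemma orlicz_norm_eq_Inf_modular:
  "orlicz_norm M I g = Inf {ennreal c | c. 0 < c \<and> orlicz_modular M (lebesgue_on I) g c \<le> 1}"
  by (simp add: orlicz_norm_def orlicz_modular_def)

lemma orlicz_norm_le:
  assumes "0 < c" and "orlicz_modular M (lebesgue_on I) g c \<le> 1"
  shows "orlicz_norm M I g \<le> ennreal c"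
  unfolding orlicz_norm_eq_Inf_modular using assms by (intro Inf_lower) auto

lemma orlicz_modular_scale_le:
  assumes M: "orlicz_function M" and [measurable]: "g \<in> borel_measurable N"
    and "0 < c" and "1 \<le> a"
  shows "orlicz_modular M N g (c * a) \<le> ennreal (1 / a) * orlicz_modular M N g c"
proof -
  note [measurable] = borel_measurable_orlicz_function[OF M]
  have "orlicz_modular M N g (c * a) \<le> (\<integral>\<^sup>+x. ennreal (1 / a) * ennreal (M (\<bar>g x\<bar> / c)) \<partial>N)"
    unfolding orlicz_modular_def
  proof (intro nn_integral_mono)
    fix x
    have "M ((1 / a) * (\<bar>g x\<bar> / c)) \<le> (1 / a) * M (\<bar>g x\<bar> / c)"
      using assms by (intro orlicz_function_scale_le) auto
    then show "ennreal (M (\<bar>g x\<bar> / (c * a))) \<le> ennreal (1 / a) * ennreal (M (\<bar>g x\<bar> / c))"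
      using assms by (simp add: ennreal_mult'[symmetric] ennreal_leI mult.commute)
  qed
  also have "\<dots> = ennreal (1 / a) * orlicz_modular M N g c"
    unfolding orlicz_modular_def by (intro nn_integral_cmult) measurable
  finally show ?thesis .
qed

lemma orlicz_norm_le_modular:
  assumes M: "orlicz_function M" and g: "g \<in> borel_measurable (lebesgue_on I)" and "0 < c"
  shows "orlicz_norm M I g \<le> ennreal c * (1 + orlicz_modular M (lebesgue_on I) g c)"
proof -
  define F where "F = orlicz_modular M (lebesgue_on I) g c"
  consider "F \<le> 1" | "F = \<infinity>" | a where "F = ennreal a" "1 < a"
    by (cases F; cases "F \<le> 1") auto
  then show ?thesis
  proof cases
    case 1
    have "orlicz_norm M I g \<le> ennreal c * 1"
      using orlicz_norm_le \<open>0 < c\<close> 1 by (simp add: F_def)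
    also have "\<dots> \<le> ennreal c * (1 + F)"
      by (intro mult_left_mono) auto
    finally show ?thesis by (simp add: F_def)
  next
    case 2
    then show ?thesis
      using \<open>0 < c\<close> by (simp add: F_def ennreal_mult_top)
  next
    case 3
    \<comment> \<open>rescaling by the modular itself brings it down to 1\<close>
    have "orlicz_modular M (lebesgue_on I) g (c * a) \<le> ennreal (1 / a) * ennreal a"
      using orlicz_modular_scale_le[OF M g \<open>0 < c\<close>, of a] 3 by (simp add: F_def)
    also have "\<dots> = 1"
      using 3 by (simp add: ennreal_mult'[symmetric])
    finally have "orlicz_norm M I g \<le> ennreal c * ennreal a"
      using orlicz_norm_le[of "c * a"] \<open>0 < c\<close> 3 by (simp add: ennreal_mult)
    also have "\<dots> \<le> ennreal c * (1 + F)"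
      using 3 by (intro mult_left_mono) auto
    finally show ?thesis by (simp add: F_def)
  qed
qed

lemma orlicz_modular_eq_weighted_sum:
  fixes M :: "real \<Rightarrow> real" and h :: "'a \<Rightarrow> real" and g :: "nat \<Rightarrow> 'a \<Rightarrow> real"
    and a :: "nat \<Rightarrow> ennreal"
  assumes M: "orlicz_function M" and N: "sigma_finite_measure N"
    and [measurable]: "h \<in> borel_measurable N" "\<And>k. g k \<in> borel_measurable N"
    and distr: "\<And>t. 0 < t \<Longrightarrow> emeasure N {x \<in> space N. t < \<bar>h x\<bar>}
                  = (\<Sum>k. a k * emeasure N {x \<in> space N. t < \<bar>g k x\<bar>})"
    and "0 < c"
  shows "orlicz_modular M N h c = (\<Sum>k. a k * orlicz_modular M N (g k) c)"
proof -
  note [measurable] = borel_measurable_orlicz_function[OF M]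
  define D where "D u s = emeasure N {x \<in> space N. s < M (\<bar>u x\<bar> / c)}" for u and s :: real
  have layer_cake: "orlicz_modular M N u c = (\<integral>\<^sup>+s\<in>{0<..}. D u s \<partial>lborel)"
    if [measurable]: "u \<in> borel_measurable N" for u
    unfolding orlicz_modular_def D_def
    using N orlicz_function_nonneg[OF M] by (intro nn_integral_layer_cake) auto
  have [measurable]: "D u \<in> borel_measurable lborel" if [measurable]: "u \<in> borel_measurable N" for u
    unfolding D_def measurable_lborel2 by (rule borel_measurable_emeasure_superlevel[OF N]) measurable
  have D_sum: "D h s = (\<Sum>k. a k * D (g k) s)" if "0 < s" for s
  proof (cases "\<exists>y. s < M y")
    case False
    then have "D u s = 0" for u
      by (simp add: D_def)
    then show ?thesis
      by simp
  next
    case True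
    then obtain T where "0 < T" and T: "\<And>y. 0 \<le> y \<Longrightarrow> s < M y \<longleftrightarrow> T < y"
      using orlicz_function_superlevel[OF M \<open>0 < s\<close>] by blast
    have "D u s = emeasure N {x \<in> space N. c * T < \<bar>u x\<bar>}" for u
    proof -
      have "s < M (\<bar>u x\<bar> / c) \<longleftrightarrow> c * T < \<bar>u x\<bar>" for x
        using T[of "\<bar>u x\<bar> / c"] \<open>0 < c\<close> by (simp add: pos_less_divide_eq mult.commute)
      then show ?thesis
        by (simp add: D_def)
    qed
    then show ?thesis
      using distr \<open>0 < c\<close> \<open>0 < T\<close> by simp
  qed
  have "orlicz_modular M N h c = (\<integral>\<^sup>+s. (\<Sum>k. a k * (D (g k) s * indicator {0<..} s)) \<partial>lborel)"
    unfolding layer_cake[OF \<open>h \<in> borel_measurable N\<close>]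
    by (intro nn_integral_cong) (simp add: D_sum split: split_indicator)
  also have "\<dots> = (\<Sum>k. a k * (\<integral>\<^sup>+s\<in>{0<..}. D (g k) s \<partial>lborel))"
    by (simp add: nn_integral_suminf nn_integral_cmult)
  also have "\<dots> = (\<Sum>k. a k * orlicz_modular M N (g k) c)"
    by (simp add: layer_cake)
  finally show ?thesis .
qed

lemma emeasure_dilation_superlevel:
  fixes I :: "real set"
  assumes "I \<in> sets lebesgue" and "0 < l" and "\<And>y. y \<in> I \<Longrightarrow> l * y \<in> I" and "0 \<le> t"
  shows "emeasure (lebesgue_on I) {x \<in> I. t < \<bar>dilation I l g x\<bar>}
       = ennreal l * emeasure (lebesgue_on I) {x \<in> I. t < \<bar>g x\<bar>}"
proof -
  have restrict: "emeasure (lebesgue_on I) A = emeasure lebesgue A" if "A \<subseteq> I" for A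
    using \<open>I \<in> sets lebesgue\<close> that by (simp add: emeasure_restrict_space)
  have dilated: "{x \<in> I. t < \<bar>dilation I l g x\<bar>} = (\<lambda>y. l *\<^sub>R y + 0) ` {y \<in> I. t < \<bar>g y\<bar>}"
  proof (intro set_eqI iffI)
    fix x
    assume "x \<in> {x \<in> I. t < \<bar>dilation I l g x\<bar>}"
    then have "x / l \<in> {y \<in> I. t < \<bar>g y\<bar>}"
      using assms by (auto simp: dilation_def split: if_splits)
    moreover have "x = l *\<^sub>R (x / l) + 0"
      using \<open>0 < l\<close> by simp
    ultimately show "x \<in> (\<lambda>y. l *\<^sub>R y + 0) ` {y \<in> I. t < \<bar>g y\<bar>}"
      by blast
  qed (use assms in \<open>auto simp: dilation_def\<close>)
  have "emeasure (lebesgue_on I) {x \<in> I. t < \<bar>dilation I l g x\<bar>}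
      = emeasure lebesgue ((\<lambda>y. l *\<^sub>R y + 0) ` {y \<in> I. t < \<bar>g y\<bar>})"
    unfolding dilated[symmetric] by (rule restrict) auto
  also have "\<dots> = ennreal l * emeasure lebesgue {y \<in> I. t < \<bar>g y\<bar>}"
    using \<open>0 < l\<close> emeasure_lebesgue_affine[of l 0 "{y \<in> I. t < \<bar>g y\<bar>}"] by simp
  also have "\<dots> = ennreal l * emeasure (lebesgue_on I) {y \<in> I. t < \<bar>g y\<bar>}"
    by (subst restrict) auto
  finally show ?thesis .
qed

lemma orlicz_norm_weighted_sum_le:
  fixes a :: "nat \<Rightarrow> ennreal"
  assumes M: "orlicz_function M" and a: "(\<Sum>k. a k) = 1"
    and g: "\<And>k. g k \<in> borel_measurable (lebesgue_on I)"
    and modular: "\<And>c. 0 < c \<Longrightarrow> orlicz_modular M (lebesgue_on I) h c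
                     = (\<Sum>k. a k * orlicz_modular M (lebesgue_on I) (g k) c)"
  shows "(\<Sum>k. a k * orlicz_norm M I (g k)) \<le> 2 * orlicz_norm M I h"
proof -
  let ?\<rho> = "orlicz_modular M (lebesgue_on I)"
  define R where "R = (\<Sum>k. a k * orlicz_norm M I (g k))"
  have "R \<le> 2 * ennreal c" if "0 < c" and "?\<rho> h c \<le> 1" for c
  proof -
    have "R \<le> (\<Sum>k. a k * (ennreal c * (1 + ?\<rho> (g k) c)))"
      unfolding R_def using orlicz_norm_le_modular[OF M g \<open>0 < c\<close>]
      by (intro suminf_le mult_left_mono) auto
    also have "\<dots> = (\<Sum>k. ennreal c * a k + ennreal c * (a k * ?\<rho> (g k) c))"
      by (simp add: algebra_simps)
    also have "\<dots> = ennreal c * (\<Sum>k. a k) + ennreal c * (\<Sum>k. a k * ?\<rho> (g k) c)"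
      by (simp add: suminf_add[symmetric] summableI)
    also have "\<dots> = ennreal c + ennreal c * ?\<rho> h c"
      using a modular \<open>0 < c\<close> by simp
    also have "\<dots> \<le> ennreal c + ennreal c * 1"
      using that by (intro add_left_mono mult_left_mono) auto
    finally show ?thesis
      by (simp add: mult_2)
  qed
  then have "R / 2 \<le> orlicz_norm M I h"
    unfolding orlicz_norm_eq_Inf_modular by (force intro: Inf_greatest divide_le_posI_ennreal)
  then have "2 * (R / 2) \<le> 2 * orlicz_norm M I h"
    by (rule mult_left_mono) simp
  then show ?thesis
    unfolding R_def[symmetric]
    by (simp add: ennreal_times_divide mult.commute[of 2] mult_divide_eq_ennreal)
qed

theorem lemma3p2:
  fixes M :: "real \<Rightarrow> real" and I :: "real set"
    and f :: "nat \<Rightarrow> real \<Rightarrow> real" and lam :: "nat \<Rightarrow> real" and h :: "real \<Rightarrow> real"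
  assumes "orlicz_function M"
    and "I = {0<..<1} \<or> I = {0<..}"
    and "\<And>k. in_orlicz M I (f k)"
    and "\<And>k. 0 < lam k \<and> lam k < 1"
    and "lam sums 1"
    and "is_disjoint_sum I (\<lambda>k. dilation I (lam k) (f k)) h"
  shows "4 * orlicz_norm M I h \<ge> (\<Sum>k. ennreal (lam k) * orlicz_norm M I (f k))"
proof -
  note M = assms(1) and I = assms(2) and lam = assms(4)
  have I_sets: "I \<in> sets lebesgue"
    using I by auto
  have I_dilation_closed: "lam k * y \<in> I" if "y \<in> I" for k y
    using I lam[of k] that mult_strict_mono[of "lam k" 1 y 1] by auto
  have f: "f k \<in> borel_measurable (lebesgue_on I)" for k
    using assms(3) by (simp add: in_orlicz_def)
  have h: "h \<in> borel_measurable (lebesgue_on I)"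
    and h_distr: "\<And>t. 0 < t \<Longrightarrow> emeasure (lebesgue_on I) {x \<in> I. t < \<bar>h x\<bar>}
        = (\<Sum>k. emeasure (lebesgue_on I) {x \<in> I. t < \<bar>dilation I (lam k) (f k) x\<bar>})"
    using assms(6) by (auto simp: is_disjoint_sum_def)
  have "(\<Sum>k. ennreal (lam k)) = ennreal 1"
    using lam assms(5) by (intro suminf_ennreal_eq) (auto intro: less_imp_le)
  then have lam_sum: "(\<Sum>k. ennreal (lam k)) = 1"
    by simp
  have modular: "orlicz_modular M (lebesgue_on I) h c
      = (\<Sum>k. ennreal (lam k) * orlicz_modular M (lebesgue_on I) (f k) c)" if "0 < c" for c
    by (rule orlicz_modular_eq_weighted_sum[OF M sigma_finite_lebesgue_on[OF I_sets] h f _ that])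
      (simp add: h_distr emeasure_dilation_superlevel[OF I_sets] lam I_dilation_closed)
  have "(\<Sum>k. ennreal (lam k) * orlicz_norm M I (f k)) \<le> 2 * orlicz_norm M I h"
    by (rule orlicz_norm_weighted_sum_le[OF M lam_sum f modular])
  also have "\<dots> \<le> 4 * orlicz_norm M I h"
    by (intro mult_right_mono) auto
  finally show ?thesis .
qed

end
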